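(* Let $A\in\mathbf{R}^{n\times n}$, $C_i\in\mathbf{R}^{m_i\times n}$ ($i=1,\ldots,N$), $H\in\mathbf{R}^{p\times n}$ with $(H,A)$ observable, and let $\mathcal{L}$ be the Laplacian of a directed graph on $N$ nodes which has a spanning tree. Set $\bar A=I_N\otimes A$, $\bar C=\mathrm{diag}[C_1,\ldots,C_N]$, $\bar H=\mathcal{L}\otimes H$. If $\bigcap_{i=1}^N\mathcal{C}_i=\{0\}$, where $\mathcal{C}_i$ is the undetectable subspace of $(C_i,A)$, then the pair $\left(\begin{bmatrix}\bar C\\ \bar H\end{bmatrix},\bar A\right)$ is detectable.
   Context: Directed graph on $\{1,\ldots,N\}$ without self-loops; adjacency matrix $\mathbf{A}=[\mathbf{a}_{ij}]$ with $\mathbf{a}_{ij}=1$ if there is an edge from $j$ to $i$, else $0$; $p_i$ the in-degree of node $i$; Laplacian $\mathcal{L}=\mathrm{diag}[p_1,\ldots,p_N]-\mathbf{A}$. A spanning tree is a directed tree containing all nodes, rooted at a node from which every node is reachable by a directed path. For a square matrix $F$ with minimal polynomial $\alpha_F=\alpha_F^-\alpha_F^+$ (zeros of $\alpha_F^-$ in the open left half-plane, of $\alpha_F^+$ in the closed right half-plane), the undetectable subspace of $(G,F)$ is $\bigcap_{l=1}^n\operatorname{Ker}(GF^{l-1})\cap\operatorname{Ker}\alpha_F^+(F)$; the pair is detectable iff this subspace is $\{0\}$. *)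

theory Defs
  imports Complex_Main "HOL-Computational_Algebra.Polynomial" "Jordan_Normal_Form.Matrix_Kernel"
begin

fun poly_mat_list :: "'a::comm_ring_1 list \<Rightarrow> 'a mat \<Rightarrow> 'a mat" where
  "poly_mat_list [] F = 0\<^sub>m (dim_row F) (dim_row F)"
| "poly_mat_list (c # cs) F = c \<cdot>\<^sub>m 1\<^sub>m (dim_row F) + F * poly_mat_list cs F"

definition poly_mat :: "'a::comm_ring_1 poly \<Rightarrow> 'a mat \<Rightarrow> 'a mat" where
  "poly_mat p F = poly_mat_list (coeffs p) F"

definition min_poly :: "'a::field mat \<Rightarrow> 'a poly" where
  "min_poly F = (THE p. lead_coeff p = 1 \<and> poly_mat p F = 0\<^sub>m (dim_row F) (dim_row F) \<and>
      (\<forall>q. lead_coeff q = 1 \<and> poly_mat q F = 0\<^sub>m (dim_row F) (dim_row F) \<longrightarrow> degree p \<le> degree q))"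

text \<open>For a (nonzero) complex polynomial q = q^- q^+, the factor q^+ collecting the zeros
  (with multiplicity) in the closed right half-plane.\<close>
definition rhp_factor :: "complex poly \<Rightarrow> complex poly" where
  "rhp_factor q = (\<Prod>r\<in>{r. poly q r = 0 \<and> 0 \<le> Re r}. [:-r, 1:] ^ order r q)"

definition undetectable_subspace :: "real mat \<Rightarrow> real mat \<Rightarrow> real vec set" where
  "undetectable_subspace G F =
     {x \<in> carrier_vec (dim_col F).
        (\<forall>l\<in>{1..dim_col F}. (G * F ^\<^sub>m (l - 1)) *\<^sub>v x = 0\<^sub>v (dim_row G)) \<and>
        poly_mat (rhp_factor (map_poly complex_of_real (min_poly F))) (map_mat complex_of_real F)
          *\<^sub>v map_vec complex_of_real x = 0\<^sub>v (dim_row F)}"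

definition detectable :: "real mat \<Rightarrow> real mat \<Rightarrow> bool" where
  "detectable G F \<longleftrightarrow> undetectable_subspace G F = {0\<^sub>v (dim_col F)}"

definition observable :: "real mat \<Rightarrow> real mat \<Rightarrow> bool" where
  "observable G F \<longleftrightarrow>
     {x \<in> carrier_vec (dim_col F).
        \<forall>l\<in>{1..dim_col F}. (G * F ^\<^sub>m (l - 1)) *\<^sub>v x = 0\<^sub>v (dim_row G)} = {0\<^sub>v (dim_col F)}"

text \<open>Adjacency matrix of a directed graph on nodes 0..N-1 without self-loops:
  entry (i,j) is 1 iff there is an edge from j to i.\<close>
definition adjacency_matrix :: "nat \<Rightarrow> real mat \<Rightarrow> bool" where
  "adjacency_matrix N Adj \<longleftrightarrow> Adj \<in> carrier_mat N N \<and>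
     (\<forall>i<N. \<forall>j<N. Adj $$ (i,j) = 0 \<or> Adj $$ (i,j) = 1) \<and> (\<forall>i<N. Adj $$ (i,i) = 0)"

definition edges :: "nat \<Rightarrow> real mat \<Rightarrow> (nat \<times> nat) set" where
  "edges N Adj = {(j,i). j < N \<and> i < N \<and> Adj $$ (i,j) = 1}"

definition has_spanning_tree :: "nat \<Rightarrow> real mat \<Rightarrow> bool" where
  "has_spanning_tree N Adj \<longleftrightarrow> (\<exists>T r. r < N \<and> T \<subseteq> edges N Adj \<and> card T = N - 1 \<and>
      (\<forall>i<N. (r,i) \<in> T\<^sup>*))"

definition laplacian :: "nat \<Rightarrow> real mat \<Rightarrow> real mat" where
  "laplacian N Adj = mat N N (\<lambda>(i,j). (if i = j then (\<Sum>k<N. Adj $$ (i,k)) else 0) - Adj $$ (i,j))"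

definition kron :: "'a::times mat \<Rightarrow> 'a mat \<Rightarrow> 'a mat" where
  "kron P Q = mat (dim_row P * dim_row Q) (dim_col P * dim_col Q)
     (\<lambda>(i,j). P $$ (i div dim_row Q, j div dim_col Q) * Q $$ (i mod dim_row Q, j mod dim_col Q))"

text \<open>Block-diagonal matrix diag[C_0,...,C_{N-1}], with C k of size (m k) x n.\<close>
definition row_off :: "(nat \<Rightarrow> nat) \<Rightarrow> nat \<Rightarrow> nat" where
  "row_off m k = (\<Sum>i<k. m i)"

definition block_diag :: "nat \<Rightarrow> (nat \<Rightarrow> nat) \<Rightarrow> nat \<Rightarrow> (nat \<Rightarrow> 'a::zero mat) \<Rightarrow> 'a mat" where
  "block_diag N m n C = mat (row_off m N) (N * n)
     (\<lambda>(i,j). let k = (LEAST k. i < row_off m (Suc k)) in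
        if j div n = k then C k $$ (i - row_off m k, j mod n) else 0)"

definition stack :: "'a mat \<Rightarrow> 'a mat \<Rightarrow> 'a mat" where
  "stack P Q = mat (dim_row P + dim_row Q) (dim_col P)
     (\<lambda>(i,j). if i < dim_row P then P $$ (i,j) else Q $$ (i - dim_row P, j))"

end

theory Submission
  imports Defs
begin

text \<open>Split a vector x of the networked system into its N blocks x_i of size n. Powers and
  polynomials of I \<otimes> A act blockwise and I \<otimes> A has the minimal polynomial of A, so
  each x_i lies in the undetectable subspace of (C_i, A). The Laplacian part of the output gives
  H A^k (\<Sum>_j L_ij x_j) = 0 for all k, hence \<Sum>_j L_ij x_j = 0 by observability of (H, A):
  every coordinate of the blocks is a vector in the kernel of L. If the graph has a spanning tree,
  that kernel consists of constant vectors (a maximum propagates backwards along the edges of the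
  tree to the root), so all x_i are equal to one vector in \<Inter>_i C_i = {0}.\<close>

section \<open>Kronecker products\<close>

lemma sum_nat_blocks:
  fixes f :: "nat \<Rightarrow> 'a::comm_monoid_add"
  shows "(\<Sum>k<N*n. f k) = (\<Sum>q<N. \<Sum>a<n. f (q*n+a))"
proof -
  have "(\<Sum>k\<in>{q*n..<q*n+n}. f k) = (\<Sum>a<n. f (q*n+a))" for q
    using sum.shift_bounds_nat_ivl[of f 0 "q*n" n] by (simp add: atLeast0LessThan add.commute)
  then show ?thesis using sum.nat_group[of f n N] by simp
qed

lemma block_index_less:
  assumes "q < N" "a < n" shows "q*n + a < N*(n::nat)"
proof -
  have "Suc q * n \<le> N * n" using assms(1) by (intro mult_le_mono1) simp
  then show ?thesis using assms(2) by simp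
qed

lemma eq_mat_blockI:
  fixes M M' :: "'a mat"
  assumes "M \<in> carrier_mat (r*s) (c*d)" "M' \<in> carrier_mat (r*s) (c*d)"
    and "\<And>i b j a. i < r \<Longrightarrow> b < s \<Longrightarrow> j < c \<Longrightarrow> a < d \<Longrightarrow>
           M $$ (i*s+b, j*d+a) = M' $$ (i*s+b, j*d+a)"
  shows "M = M'"
proof (rule eq_matI)
  fix k l assume "k < dim_row M'" "l < dim_col M'"
  then have k: "k < r*s" and l: "l < c*d" using assms(2) by auto
  then have "s > 0" "d > 0" by (auto intro: gr0I)
  with k l have "k div s < r" "k mod s < s" "l div d < c" "l mod d < d"
    by (auto simp: less_mult_imp_div_less)
  then show "M $$ (k,l) = M' $$ (k,l)"
    using assms(3)[of "k div s" "k mod s" "l div d" "l mod d"] by simp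
qed (use assms in auto)

lemma dim_kron [simp]:
  "dim_row (kron P Q) = dim_row P * dim_row Q" "dim_col (kron P Q) = dim_col P * dim_col Q"
  unfolding kron_def by simp_all

lemma index_kron:
  assumes "i < dim_row P" "b < dim_row Q" "j < dim_col P" "a < dim_col Q"
  shows "kron P Q $$ (i * dim_row Q + b, j * dim_col Q + a) = P $$ (i,j) * Q $$ (b,a)"
proof -
  have "i * dim_row Q + b < dim_row P * dim_row Q" "j * dim_col Q + a < dim_col P * dim_col Q"
    using assms by (simp_all add: block_index_less)
  then show ?thesis using assms unfolding kron_def by simp
qed

lemma kron_mult_kron:
  fixes P Q R S :: "'a::comm_semiring_1 mat"
  assumes "dim_col P = dim_row R" "dim_col Q = dim_row S"
  shows "kron P Q * kron R S = kron (P * R) (Q * S)"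
proof (rule eq_mat_blockI)
  fix i b j a assume i: "i < dim_row P" and b: "b < dim_row Q" and j: "j < dim_col R" and a: "a < dim_col S"
  have "(kron P Q * kron R S) $$ (i * dim_row Q + b, j * dim_col S + a) =
      (\<Sum>k < dim_col P * dim_col Q. kron P Q $$ (i * dim_row Q + b, k) * kron R S $$ (k, j * dim_col S + a))"
    using i b j a block_index_less assms
    by (simp add: scalar_prod_def lessThan_atLeast0 mult.commute)
  also have "\<dots> = (\<Sum>c < dim_col P. \<Sum>e < dim_col Q. (P $$ (i,c) * R $$ (c,j)) * (Q $$ (b,e) * S $$ (e,a)))"
    unfolding sum_nat_blocks
  proof (intro sum.cong refl)
    fix c e assume "c \<in> {..<dim_col P}" "e \<in> {..<dim_col Q}"
    then have "kron P Q $$ (i * dim_row Q + b, c * dim_col Q + e) = P $$ (i,c) * Q $$ (b,e)"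
      and "kron R S $$ (c * dim_col Q + e, j * dim_col S + a) = R $$ (c,j) * S $$ (e,a)"
      using index_kron[of i P b Q c e] index_kron[of c R e S j a] i b j a assms by auto
    then show "kron P Q $$ (i * dim_row Q + b, c * dim_col Q + e) * kron R S $$ (c * dim_col Q + e, j * dim_col S + a)
        = P $$ (i,c) * R $$ (c,j) * (Q $$ (b,e) * S $$ (e,a))"
      by (simp add: ac_simps)
  qed
  also have "\<dots> = (P * R) $$ (i,j) * (Q * S) $$ (b,a)"
    using i b j a assms by (simp add: scalar_prod_def sum_product lessThan_atLeast0)
  also have "\<dots> = kron (P * R) (Q * S) $$ (i * dim_row Q + b, j * dim_col S + a)"
    using index_kron[of i "P * R" b "Q * S" j a] i b j a by simp
  finally show "(kron P Q * kron R S) $$ (i * dim_row Q + b, j * dim_col S + a) =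
      kron (P * R) (Q * S) $$ (i * dim_row Q + b, j * dim_col S + a)" .
qed (auto intro: carrier_matI)

lemma kron_one_one: "kron (1\<^sub>m N) (1\<^sub>m n) = (1\<^sub>m (N*n) :: 'a::semiring_1 mat)"
proof (rule eq_mat_blockI)
  fix i b j a assume i: "i < N" and b: "b < n" and j: "j < N" and a: "a < n"
  have "i*n+b = j*n+a \<longleftrightarrow> i = j \<and> b = a"
  proof
    assume eq: "i*n+b = j*n+a"
    have "i = (i*n+b) div n" "j = (j*n+a) div n" "b = (i*n+b) mod n" "a = (j*n+a) mod n"
      using a b by auto
    then show "i = j \<and> b = a" unfolding eq by simp
  qed auto
  then have "(1\<^sub>m (N*n) :: 'a mat) $$ (i*n+b, j*n+a) = (if i = j \<and> b = a then 1 else 0)"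
    using block_index_less[OF i b] block_index_less[OF j a] by simp
  moreover have "kron (1\<^sub>m N) (1\<^sub>m n) $$ (i*n+b, j*n+a) = (if i = j then 1 else 0) * (if b = a then (1::'a) else 0)"
    using index_kron[of i "1\<^sub>m N" b "1\<^sub>m n" j a] i b j a by simp
  ultimately show "kron (1\<^sub>m N) (1\<^sub>m n) $$ (i*n+b, j*n+a) = (1\<^sub>m (N*n) :: 'a mat) $$ (i*n+b, j*n+a)"
    by simp
qed (auto intro: carrier_matI)

lemma kron_add_right:
  fixes P Q Q' :: "'a::semiring mat"
  assumes Q': "Q' \<in> carrier_mat (dim_row Q) (dim_col Q)"
  shows "kron P (Q + Q') = kron P Q + kron P Q'"
proof (rule eq_mat_blockI[where r = "dim_row P" and c = "dim_col P"])
  fix i b j a assume "i < dim_row P" "b < dim_row Q" "j < dim_col P" "a < dim_col Q"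
  then show "kron P (Q + Q') $$ (i * dim_row Q + b, j * dim_col Q + a) =
      (kron P Q + kron P Q') $$ (i * dim_row Q + b, j * dim_col Q + a)"
    using index_kron[of i P b "Q + Q'" j a] index_kron[of i P b Q j a] index_kron[of i P b Q' j a]
      block_index_less[of i "dim_row P" b] block_index_less[of j "dim_col P" a] Q'
    by (simp add: distrib_left)
qed (use Q' in \<open>auto intro: carrier_matI\<close>)

lemma kron_smult_right:
  fixes P Q :: "'a::comm_semiring_0 mat"
  shows "kron P (c \<cdot>\<^sub>m Q) = c \<cdot>\<^sub>m kron P Q"
proof (rule eq_mat_blockI[where r = "dim_row P" and c = "dim_col P"])
  fix i b j a assume "i < dim_row P" "b < dim_row Q" "j < dim_col P" "a < dim_col Q"
  then show "kron P (c \<cdot>\<^sub>m Q) $$ (i * dim_row Q + b, j * dim_col Q + a) =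
      (c \<cdot>\<^sub>m kron P Q) $$ (i * dim_row Q + b, j * dim_col Q + a)"
    using index_kron[of i P b "c \<cdot>\<^sub>m Q" j a] index_kron[of i P b Q j a]
      block_index_less[of i "dim_row P" b "dim_row Q"] block_index_less[of j "dim_col P" a "dim_col Q"]
    by (simp add: mult.left_commute)
qed (auto intro: carrier_matI)

lemma kron_zero_right:
  "kron P (0\<^sub>m r c :: 'a::mult_zero mat) = 0\<^sub>m (dim_row P * r) (dim_col P * c)"
proof (rule eq_mat_blockI[where r = "dim_row P" and c = "dim_col P"])
  fix i b j a assume "i < dim_row P" "b < r" "j < dim_col P" "a < c"
  then show "kron P (0\<^sub>m r c) $$ (i * r + b, j * c + a) = 0\<^sub>m (dim_row P * r) (dim_col P * c) $$ (i * r + b, j * c + a)"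
    using index_kron[of i P b "0\<^sub>m r c" j a] block_index_less[of i "dim_row P" b] block_index_less[of j "dim_col P" a]
    by simp
qed (auto intro: carrier_matI)

lemma map_mat_kron:
  assumes "\<And>x y. f (x * y) = f x * f y"
  shows "map_mat f (kron P Q) = kron (map_mat f P) (map_mat f Q)"
proof (rule eq_mat_blockI[where r = "dim_row P" and c = "dim_col P"])
  fix i b j a assume "i < dim_row P" "b < dim_row Q" "j < dim_col P" "a < dim_col Q"
  then show "map_mat f (kron P Q) $$ (i * dim_row Q + b, j * dim_col Q + a) =
      kron (map_mat f P) (map_mat f Q) $$ (i * dim_row Q + b, j * dim_col Q + a)"
    using index_kron[of i P b Q j a] index_kron[of i "map_mat f P" b "map_mat f Q" j a]
      block_index_less[of i "dim_row P" b] block_index_less[of j "dim_col P" a]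
    by (simp add: assms)
qed (auto intro: carrier_matI)

lemma map_mat_kron_one:
  assumes "\<And>x y. f (x * y) = f x * f y" "f 0 = 0" "f 1 = 1"
  shows "map_mat f (kron (1\<^sub>m N) B) = kron (1\<^sub>m N) (map_mat f B)"
proof -
  have "map_mat f (1\<^sub>m N) = 1\<^sub>m N" using assms(2,3) by (intro eq_matI) auto
  then show ?thesis using map_mat_kron[of f, OF assms(1)] by simp
qed

lemma kron_one_pow:
  fixes B :: "'a::comm_semiring_1 mat"
  assumes "B \<in> carrier_mat n n"
  shows "kron (1\<^sub>m N) B ^\<^sub>m k = kron (1\<^sub>m N) (B ^\<^sub>m k)"
  by (induction k) (use assms in \<open>simp_all add: kron_one_one kron_mult_kron\<close>)

lemma kron_one_eq_zero_iff:
  assumes "M \<in> carrier_mat r c" "N > 0"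
  shows "kron (1\<^sub>m N) M = 0\<^sub>m (N*r) (N*c) \<longleftrightarrow> M = (0\<^sub>m r c :: 'a::semiring_1 mat)"
proof
  assume zero: "kron (1\<^sub>m N) M = 0\<^sub>m (N*r) (N*c)"
  show "M = 0\<^sub>m r c"
  proof (rule eq_matI)
    fix b a assume "b < dim_row (0\<^sub>m r c :: 'a mat)" "a < dim_col (0\<^sub>m r c :: 'a mat)"
    then have "M $$ (b,a) = kron (1\<^sub>m N) M $$ (0 * r + b, 0 * c + a)"
      using index_kron[of 0 "1\<^sub>m N" b M 0 a] assms by simp
    then show "M $$ (b,a) = 0\<^sub>m r c $$ (b,a)"
      using \<open>b < _\<close> \<open>a < _\<close> assms block_index_less[of 0 N] unfolding zero by simp
  qed (use assms in auto)
qed (simp add: kron_zero_right)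

lemma poly_mat_list_carrier:
  "F \<in> carrier_mat n n \<Longrightarrow> poly_mat_list cs F \<in> carrier_mat n n"
  by (induction cs) auto

lemma poly_mat_carrier:
  "F \<in> carrier_mat n n \<Longrightarrow> poly_mat p F \<in> carrier_mat n n"
  unfolding poly_mat_def by (rule poly_mat_list_carrier)

lemma poly_mat_list_kron_one:
  fixes B :: "'a::comm_ring_1 mat"
  assumes B: "B \<in> carrier_mat n n"
  shows "poly_mat_list cs (kron (1\<^sub>m N) B) = kron (1\<^sub>m N) (poly_mat_list cs B)"
proof (induction cs)
  case Nil
  then show ?case using B by (simp add: kron_zero_right)
next
  case (Cons c cs)
  have "kron (1\<^sub>m N) (poly_mat_list (c # cs) B)
      = c \<cdot>\<^sub>m kron (1\<^sub>m N) (1\<^sub>m n) + kron (1\<^sub>m N) B * kron (1\<^sub>m N) (poly_mat_list cs B)"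
    using B poly_mat_list_carrier[OF B, of cs]
      kron_mult_kron[of "1\<^sub>m N" "1\<^sub>m N" B "poly_mat_list cs B"]
    by (simp add: kron_add_right kron_smult_right)
  then show ?case using B Cons by (simp add: kron_one_one)
qed

lemma poly_mat_kron_one:
  fixes B :: "'a::comm_ring_1 mat"
  shows "B \<in> carrier_mat n n \<Longrightarrow> poly_mat p (kron (1\<^sub>m N) B) = kron (1\<^sub>m N) (poly_mat p B)"
  unfolding poly_mat_def by (rule poly_mat_list_kron_one)

lemma min_poly_kron_one:
  fixes A :: "'a::field mat"
  assumes A: "A \<in> carrier_mat n n" and N: "N > 0"
  shows "min_poly (kron (1\<^sub>m N) A) = min_poly A"
proof -
  have "poly_mat p (kron (1\<^sub>m N) A) = 0\<^sub>m (N*n) (N*n) \<longleftrightarrow> poly_mat p A = 0\<^sub>m n n" for p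
    using kron_one_eq_zero_iff[OF poly_mat_carrier[OF A] N] poly_mat_kron_one[OF A] by simp
  then show ?thesis using A unfolding min_poly_def by simp
qed

section \<open>Block vectors, block-diagonal and stacked matrices\<close>

lemma index_mult_mat_vec_sum:
  assumes "i < dim_row M" "x \<in> carrier_vec (dim_col M)"
  shows "(M *\<^sub>v x) $ i = (\<Sum>k<dim_col M. M $$ (i,k) * x $ k)"
  using assms by (auto simp: scalar_prod_def lessThan_atLeast0 intro!: sum.cong)

definition vec_block :: "nat \<Rightarrow> 'a vec \<Rightarrow> nat \<Rightarrow> 'a vec" where
  "vec_block n x j = vec n (\<lambda>a. x $ (j*n+a))"

text \<open>block_lincomb P n x i is the i-th block of (P \<otimes> I_n) x.\<close>
definition block_lincomb :: "'a::semiring_0 mat \<Rightarrow> nat \<Rightarrow> 'a vec \<Rightarrow> nat \<Rightarrow> 'a vec" where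
  "block_lincomb P n x i = vec n (\<lambda>a. \<Sum>j<dim_col P. P $$ (i,j) * x $ (j*n+a))"

lemma vec_block_carrier [simp]: "vec_block n x j \<in> carrier_vec n"
  unfolding vec_block_def by simp

lemma block_lincomb_carrier [simp]: "block_lincomb P n x i \<in> carrier_vec n"
  unfolding block_lincomb_def by simp

lemma vec_block_kron_mult_vec:
  fixes P Q :: "'a::comm_semiring_0 mat"
  assumes P: "P \<in> carrier_mat r c" and Q: "Q \<in> carrier_mat s d" and x: "x \<in> carrier_vec (c*d)"
    and i: "i < r"
  shows "vec_block s (kron P Q *\<^sub>v x) i = Q *\<^sub>v block_lincomb P d x i"
proof (rule eq_vecI)
  fix b assume "b < dim_vec (Q *\<^sub>v block_lincomb P d x i)"
  then have b: "b < s" using Q by simp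
  have "vec_block s (kron P Q *\<^sub>v x) i $ b = (\<Sum>k<c*d. kron P Q $$ (i*s+b, k) * x $ k)"
    using index_mult_mat_vec_sum[of "i*s+b" "kron P Q" x] block_index_less[OF i b] P Q x b
    by (simp add: vec_block_def)
  also have "\<dots> = (\<Sum>j<c. \<Sum>a<d. P $$ (i,j) * Q $$ (b,a) * x $ (j*d+a))"
    unfolding sum_nat_blocks using index_kron[of i P b Q] P Q i b by (intro sum.cong refl) auto
  also have "\<dots> = (\<Sum>a<d. Q $$ (b,a) * (\<Sum>j<c. P $$ (i,j) * x $ (j*d+a)))"
    by (subst sum.swap) (simp add: sum_distrib_left ac_simps)
  also have "\<dots> = (Q *\<^sub>v block_lincomb P d x i) $ b"
    using index_mult_mat_vec_sum[of b Q "block_lincomb P d x i"] P Q b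
    by (simp add: block_lincomb_def)
  finally show "vec_block s (kron P Q *\<^sub>v x) i $ b = (Q *\<^sub>v block_lincomb P d x i) $ b" .
qed (use Q in \<open>simp add: vec_block_def\<close>)

lemma block_lincomb_one:
  fixes x :: "'a::semiring_1 vec"
  assumes "j < N"
  shows "block_lincomb (1\<^sub>m N) n x j = vec_block n x j"
proof -
  have "(\<Sum>k<N. 1\<^sub>m N $$ (j,k) * x $ (k*n+a)) = (\<Sum>k<N. if k = j then x $ (k*n+a) else 0)" for a
    using assms by (intro sum.cong) auto
  then show ?thesis using assms unfolding block_lincomb_def vec_block_def by simp
qed

lemma vec_block_kron_one_mult_vec:
  fixes M :: "'a::comm_semiring_1 mat"
  assumes "M \<in> carrier_mat s d" "x \<in> carrier_vec (N*d)" "j < N"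
  shows "vec_block s (kron (1\<^sub>m N) M *\<^sub>v x) j = M *\<^sub>v vec_block d x j"
  using vec_block_kron_mult_vec[of "1\<^sub>m N" N N M s d x j] assms by (simp add: block_lincomb_one)

lemma vec_block_map_vec:
  "x \<in> carrier_vec (N*n) \<Longrightarrow> j < N \<Longrightarrow> vec_block n (map_vec f x) j = map_vec f (vec_block n x j)"
  unfolding vec_block_def by (auto simp: block_index_less)

lemma vec_block_zero: "j < N \<Longrightarrow> vec_block n (0\<^sub>v (N*n)) j = 0\<^sub>v n"
  unfolding vec_block_def by (auto simp: block_index_less)

lemma vec_eq_zero_if_blocks_zero:
  assumes x: "x \<in> carrier_vec (N*n)" and blocks: "\<And>j. j < N \<Longrightarrow> vec_block n x j = 0\<^sub>v n"
  shows "x = 0\<^sub>v (N*n)"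
proof (rule eq_vecI)
  fix k assume "k < dim_vec (0\<^sub>v (N*n) :: 'a vec)"
  then have k: "k < N*n" by simp
  then have "n > 0" by (auto intro: gr0I)
  with k have "k div n < N" "k mod n < n" by (auto simp: less_mult_imp_div_less)
  then have "x $ (k div n * n + k mod n) = 0"
    using blocks[of "k div n"] unfolding vec_block_def by (metis index_vec index_zero_vec(1))
  then show "x $ k = 0\<^sub>v (N*n) $ k" using k by simp
qed (use x in simp)

lemma row_off_mono: "k \<le> i \<Longrightarrow> row_off m k \<le> row_off m i"
  unfolding row_off_def by (rule sum_mono2) auto

lemma row_off_Suc: "row_off m (Suc i) = row_off m i + m i"
  unfolding row_off_def by simp

lemma block_of_row_off:
  assumes "c < m i"
  shows "(LEAST k. row_off m i + c < row_off m (Suc k)) = i"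
proof (rule Least_equality)
  show "row_off m i + c < row_off m (Suc i)" using assms by (simp add: row_off_Suc)
next
  fix k assume "row_off m i + c < row_off m (Suc k)"
  then show "i \<le> k" using row_off_mono[of "Suc k" i m] by (cases "i \<le> k") auto
qed

lemma dim_block_diag [simp]:
  "dim_row (block_diag N m n C) = row_off m N" "dim_col (block_diag N m n C) = N*n"
  unfolding block_diag_def by simp_all

lemma index_block_diag_mult_vec:
  fixes C :: "nat \<Rightarrow> 'a::comm_semiring_0 mat"
  assumes C: "\<forall>i<N. C i \<in> carrier_mat (m i) n" and x: "x \<in> carrier_vec (N*n)"
    and i: "i < N" and c: "c < m i"
  shows "(block_diag N m n C *\<^sub>v x) $ (row_off m i + c) = (C i *\<^sub>v vec_block n x i) $ c"
proof -
  let ?r = "row_off m i + c"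
  have r: "?r < row_off m N"
    using c row_off_mono[of "Suc i" N m] i by (simp add: row_off_Suc)
  have entry: "block_diag N m n C $$ (?r, q*n+a) = (if q = i then C i $$ (c,a) else 0)"
    if "q < N" "a < n" for q a
    using that r block_index_less[OF that] block_of_row_off[of c m i, OF c] by (simp add: block_diag_def Let_def)
  have "(block_diag N m n C *\<^sub>v x) $ ?r = (\<Sum>q<N. \<Sum>a<n. block_diag N m n C $$ (?r, q*n+a) * x $ (q*n+a))"
    using index_mult_mat_vec_sum[of ?r "block_diag N m n C" x] r x
    by (simp add: sum_nat_blocks)
  also have "\<dots> = (\<Sum>q<N. if q = i then \<Sum>a<n. C i $$ (c,a) * x $ (i*n+a) else 0)"
    by (intro sum.cong refl) (simp add: entry)
  also have "\<dots> = (C i *\<^sub>v vec_block n x i) $ c"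
  proof -
    have "dim_row (C i) = m i" "dim_col (C i) = n" using C i by auto
    then show ?thesis using index_mult_mat_vec_sum[of c "C i" "vec_block n x i"] c i by (simp add: vec_block_def)
  qed
  finally show ?thesis .
qed

lemma block_diag_mult_vec_eq_zero:
  fixes C :: "nat \<Rightarrow> 'a::comm_semiring_0 mat"
  assumes C: "\<forall>i<N. C i \<in> carrier_mat (m i) n" and x: "x \<in> carrier_vec (N*n)"
    and zero: "block_diag N m n C *\<^sub>v x = 0\<^sub>v (row_off m N)" and i: "i < N"
  shows "C i *\<^sub>v vec_block n x i = 0\<^sub>v (m i)"
proof (rule eq_vecI)
  fix c assume "c < dim_vec (0\<^sub>v (m i) :: 'a vec)"
  then have c: "c < m i" by simp
  then have "row_off m i + c < row_off m N"
    using row_off_mono[of "Suc i" N m] i by (simp add: row_off_Suc)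
  then show "(C i *\<^sub>v vec_block n x i) $ c = 0\<^sub>v (m i) $ c"
    using index_block_diag_mult_vec[OF C x i c] zero c by simp
qed (use C i in auto)

lemma dim_stack [simp]:
  "dim_row (stack P Q) = dim_row P + dim_row Q" "dim_col (stack P Q) = dim_col P"
  unfolding stack_def by simp_all

lemma stack_mult_vec_eq_zero_iff:
  assumes "dim_col Q = dim_col P"
  shows "stack P Q *\<^sub>v y = 0\<^sub>v (dim_row P + dim_row Q) \<longleftrightarrow>
           P *\<^sub>v y = 0\<^sub>v (dim_row P) \<and> Q *\<^sub>v y = 0\<^sub>v (dim_row Q)"
proof -
  have upper: "(stack P Q *\<^sub>v y) $ k = (P *\<^sub>v y) $ k" if "k < dim_row P" for k
  proof -
    have "row (stack P Q) k = row P k" using that by (intro eq_vecI) (auto simp: stack_def)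
    then show ?thesis using that by (simp add: stack_def)
  qed
  have lower: "(stack P Q *\<^sub>v y) $ (dim_row P + k) = (Q *\<^sub>v y) $ k" if "k < dim_row Q" for k
  proof -
    have "row (stack P Q) (dim_row P + k) = row Q k" using that assms by (intro eq_vecI) (auto simp: stack_def)
    then show ?thesis using that by (simp add: stack_def)
  qed
  show ?thesis
  proof
    assume zero: "stack P Q *\<^sub>v y = 0\<^sub>v (dim_row P + dim_row Q)"
    have "(P *\<^sub>v y) $ k = 0" if "k < dim_row P" for k
      using upper[OF that] zero that by simp
    moreover have "(Q *\<^sub>v y) $ k = 0" if "k < dim_row Q" for k
      using lower[OF that] zero that by simp
    ultimately show "P *\<^sub>v y = 0\<^sub>v (dim_row P) \<and> Q *\<^sub>v y = 0\<^sub>v (dim_row Q)"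
      by (auto intro!: eq_vecI)
  next
    assume zero: "P *\<^sub>v y = 0\<^sub>v (dim_row P) \<and> Q *\<^sub>v y = 0\<^sub>v (dim_row Q)"
    have "(stack P Q *\<^sub>v y) $ k = 0" if "k < dim_row P + dim_row Q" for k
    proof (cases "k < dim_row P")
      case True
      then show ?thesis using upper zero by simp
    next
      case False
      then have "k = dim_row P + (k - dim_row P)" "k - dim_row P < dim_row Q" using that by auto
      then show ?thesis using lower[of "k - dim_row P"] zero by simp
    qed
    then show "stack P Q *\<^sub>v y = 0\<^sub>v (dim_row P + dim_row Q)"
      by (intro eq_vecI) auto
  qed
qed

section \<open>Kernel of the Laplacian\<close>

lemma laplacian_sum_eq_sum_diff:
  assumes "i < N"
  shows "(\<Sum>j<N. laplacian N Adj $$ (i,j) * u j) = (\<Sum>j<N. Adj $$ (i,j) * (u i - u j))"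
proof -
  have "(\<Sum>j<N. laplacian N Adj $$ (i,j) * u j)
      = (\<Sum>j<N. if j = i then (\<Sum>k<N. Adj $$ (i,k)) * u i else 0) - (\<Sum>j<N. Adj $$ (i,j) * u j)"
    unfolding sum_subtractf[symmetric] using assms
    by (intro sum.cong) (auto simp: laplacian_def left_diff_distrib)
  also have "\<dots> = (\<Sum>k<N. Adj $$ (i,k)) * u i - (\<Sum>j<N. Adj $$ (i,j) * u j)"
    using assms by simp
  also have "\<dots> = (\<Sum>j<N. Adj $$ (i,j) * (u i - u j))"
    by (simp add: sum_distrib_right right_diff_distrib sum_subtractf)
  finally show ?thesis .
qed

lemma laplacian_kernel_max_propagates:
  assumes adj: "adjacency_matrix N Adj"
    and ker: "\<forall>i<N. (\<Sum>j<N. laplacian N Adj $$ (i,j) * u j) = 0"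
    and i: "i < N" and j: "j < N" and edge: "Adj $$ (i,j) = 1" and max: "\<forall>k<N. u k \<le> u i"
  shows "u j = u i"
proof -
  have "\<forall>k<N. Adj $$ (i,k) = 0 \<or> Adj $$ (i,k) = 1" using adj i unfolding adjacency_matrix_def by blast
  then have nonneg: "\<forall>k\<in>{..<N}. 0 \<le> Adj $$ (i,k) * (u i - u k)" using max by auto
  have "(\<Sum>k<N. Adj $$ (i,k) * (u i - u k)) = 0"
    using ker i laplacian_sum_eq_sum_diff[OF i, of Adj u] by simp
  then have "Adj $$ (i,j) * (u i - u j) = 0"
    using sum_nonneg_eq_0_iff[of "{..<N}" "\<lambda>k. Adj $$ (i,k) * (u i - u k)"] nonneg j by simp
  then show ?thesis using edge by simp
qed

lemma laplacian_kernel_max_at_root: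
  assumes adj: "adjacency_matrix N Adj"
    and ker: "\<forall>i<N. (\<Sum>j<N. laplacian N Adj $$ (i,j) * u j) = 0"
    and r: "r < N" and T: "T \<subseteq> edges N Adj" and reach: "\<forall>i<N. (r,i) \<in> T\<^sup>*"
    and j: "j < N"
  shows "u j \<le> u r"
proof -
  have "Max (u ` {..<N}) \<in> u ` {..<N}" using r by (intro Max_in) auto
  then obtain i0 where i0: "i0 < N" and "u i0 = Max (u ` {..<N})" by auto
  then have max: "\<forall>k<N. u k \<le> u i0" by simp
  have "(r,i0) \<in> T\<^sup>*" using reach i0 by simp
  then have "u r = u i0"
  proof (induction rule: converse_rtrancl_induct)
    case (step y z)
    then have "z < N" "y < N" "Adj $$ (z,y) = 1" using T unfolding edges_def by auto
    then show ?case using laplacian_kernel_max_propagates[OF adj ker] step.IH max by metis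
  qed simp
  then show ?thesis using max j by simp
qed

lemma laplacian_kernel_constant:
  assumes adj: "adjacency_matrix N Adj" and tree: "has_spanning_tree N Adj"
    and ker: "\<forall>i<N. (\<Sum>j<N. laplacian N Adj $$ (i,j) * u j) = 0"
    and i: "i < N" and j: "j < N"
  shows "u i = u j"
proof -
  obtain T r where r: "r < N" and T: "T \<subseteq> edges N Adj" and reach: "\<forall>i<N. (r,i) \<in> T\<^sup>*"
    using tree unfolding has_spanning_tree_def by blast
  have ker_neg: "\<forall>i<N. (\<Sum>j<N. laplacian N Adj $$ (i,j) * - u j) = 0"
    using ker by (simp add: sum_negf)
  have "u k = u r" if "k < N" for k
    using laplacian_kernel_max_at_root[OF adj ker r T reach that]
      laplacian_kernel_max_at_root[OF adj ker_neg r T reach that] by simp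
  then show ?thesis using i j by simp
qed

section \<open>Undetectable subspace of the networked system\<close>

lemma mult_mat_vec_zero: "M *\<^sub>v 0\<^sub>v k = 0\<^sub>v (dim_row M)"
  by (intro eq_vecI) (simp_all add: scalar_prod_def)

lemma zero_mem_undetectable_subspace: "0\<^sub>v (dim_col F) \<in> undetectable_subspace G F"
proof -
  let ?P = "poly_mat (rhp_factor (map_poly complex_of_real (min_poly F))) (map_mat complex_of_real F)"
  have "dim_row (poly_mat_list cs (map_mat complex_of_real F)) = dim_row F" for cs
    by (induction cs) simp_all
  then have dim: "dim_row ?P = dim_row F" by (simp add: poly_mat_def)
  have zero: "map_vec complex_of_real (0\<^sub>v (dim_col F)) = 0\<^sub>v (dim_col F)"
    by (intro eq_vecI) simp_all
  have "?P *\<^sub>v map_vec complex_of_real (0\<^sub>v (dim_col F)) = 0\<^sub>v (dim_row F)"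
    unfolding zero mult_mat_vec_zero dim ..
  moreover have "(G * F ^\<^sub>m (l - 1)) *\<^sub>v 0\<^sub>v (dim_col F) = 0\<^sub>v (dim_row G)" for l
    using mult_mat_vec_zero[of "G * F ^\<^sub>m (l - 1)"] by simp
  ultimately show ?thesis unfolding undetectable_subspace_def using zero_carrier_vec by blast
qed

lemma observable_imp_eq_zero:
  assumes obs: "observable H A" and A: "A \<in> carrier_mat n n" and w: "w \<in> carrier_vec n"
    and out: "\<And>k. k < n \<Longrightarrow> (H * A ^\<^sub>m k) *\<^sub>v w = 0\<^sub>v (dim_row H)"
  shows "w = 0\<^sub>v n"
proof -
  have "w \<in> {x \<in> carrier_vec (dim_col A).
      \<forall>l\<in>{1..dim_col A}. (H * A ^\<^sub>m (l - 1)) *\<^sub>v x = 0\<^sub>v (dim_row H)}"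
    using out A w by auto
  then have "w \<in> {0\<^sub>v (dim_col A)}" using obs unfolding observable_def by argo
  then show ?thesis using A by simp
qed

lemma undetectable_subspace_outputs:
  fixes A H L :: "real mat" and C :: "nat \<Rightarrow> real mat"
  assumes A: "A \<in> carrier_mat n n" and C: "\<forall>i<N. C i \<in> carrier_mat (m i) n"
    and H: "H \<in> carrier_mat p n" and L: "L \<in> carrier_mat N N"
    and x: "x \<in> undetectable_subspace (stack (block_diag N m n C) (kron L H)) (kron (1\<^sub>m N) A)"
    and k: "k < N*n" and i: "i < N"
  shows "(C i * A ^\<^sub>m k) *\<^sub>v vec_block n x i = 0\<^sub>v (m i)"
    and "(H * A ^\<^sub>m k) *\<^sub>v block_lincomb L n x i = 0\<^sub>v p"
proof -
  let ?G = "stack (block_diag N m n C) (kron L H)"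
  let ?y = "kron (1\<^sub>m N) (A ^\<^sub>m k) *\<^sub>v x"
  have Ak: "A ^\<^sub>m k \<in> carrier_mat n n" using A by simp
  have xc: "x \<in> carrier_vec (N*n)" and "(?G * kron (1\<^sub>m N) A ^\<^sub>m k) *\<^sub>v x = 0\<^sub>v (dim_row ?G)"
    using x k A unfolding undetectable_subspace_def by (auto dest!: bspec[of _ _ "Suc k"])
  moreover have "?G \<in> carrier_mat (row_off m N + N*p) (N*n)" using L H by (auto intro!: carrier_matI)
  moreover have Fk: "kron (1\<^sub>m N) (A ^\<^sub>m k) \<in> carrier_mat (N*n) (N*n)" using A by (auto intro!: carrier_matI)
  ultimately have "?G *\<^sub>v ?y = 0\<^sub>v (dim_row (block_diag N m n C) + dim_row (kron L H))"
    using A L H by (simp add: kron_one_pow)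
  moreover have "dim_col (kron L H) = dim_col (block_diag N m n C)" using L H by simp
  ultimately have "block_diag N m n C *\<^sub>v ?y = 0\<^sub>v (dim_row (block_diag N m n C))"
    and "kron L H *\<^sub>v ?y = 0\<^sub>v (dim_row (kron L H))"
    using stack_mult_vec_eq_zero_iff by blast+
  then have BD: "block_diag N m n C *\<^sub>v ?y = 0\<^sub>v (row_off m N)"
    and K: "kron L H *\<^sub>v ?y = 0\<^sub>v (N*p)"
    using L H by simp_all
  have "C i *\<^sub>v (A ^\<^sub>m k *\<^sub>v vec_block n x i) = 0\<^sub>v (m i)"
    using block_diag_mult_vec_eq_zero[OF C mult_mat_vec_carrier[OF Fk xc] BD i]
      vec_block_kron_one_mult_vec[OF Ak xc i] by simp
  then show "(C i * A ^\<^sub>m k) *\<^sub>v vec_block n x i = 0\<^sub>v (m i)"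
    using C i Ak by (simp add: assoc_mult_mat_vec[of _ "m i" n])
  have "kron L H *\<^sub>v ?y = kron L (H * A ^\<^sub>m k) *\<^sub>v x"
  proof -
    have "kron L H \<in> carrier_mat (N*p) (N*n)" using L H by (auto intro!: carrier_matI)
    then have "kron L H *\<^sub>v ?y = (kron L H * kron (1\<^sub>m N) (A ^\<^sub>m k)) *\<^sub>v x"
      using Fk xc by simp
    then show ?thesis using kron_mult_kron[of L "1\<^sub>m N" H "A ^\<^sub>m k"] L H A by simp
  qed
  then have "vec_block p (kron L (H * A ^\<^sub>m k) *\<^sub>v x) i = 0\<^sub>v p"
    using K vec_block_zero[OF i, of p] by metis
  then show "(H * A ^\<^sub>m k) *\<^sub>v block_lincomb L n x i = 0\<^sub>v p"
    using vec_block_kron_mult_vec[OF L _ xc i, of "H * A ^\<^sub>m k" p] H Ak by simp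
qed

lemma vec_block_mem_undetectable_subspace:
  fixes A H L :: "real mat" and C :: "nat \<Rightarrow> real mat"
  assumes A: "A \<in> carrier_mat n n" and C: "\<forall>i<N. C i \<in> carrier_mat (m i) n"
    and H: "H \<in> carrier_mat p n" and L: "L \<in> carrier_mat N N"
    and x: "x \<in> undetectable_subspace (stack (block_diag N m n C) (kron L H)) (kron (1\<^sub>m N) A)"
    and i: "i < N"
  shows "vec_block n x i \<in> undetectable_subspace (C i) A"
proof -
  let ?Ac = "map_mat complex_of_real A"
  let ?q = "rhp_factor (map_poly complex_of_real (min_poly A))"
  have N: "N > 0" using i by simp
  have xc: "x \<in> carrier_vec (N*n)" using x A unfolding undetectable_subspace_def by auto
  have Ac: "?Ac \<in> carrier_mat n n" using A by simp
  then have Pc: "poly_mat ?q ?Ac \<in> carrier_mat n n" by (rule poly_mat_carrier)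
  have "(C i * A ^\<^sub>m (l - 1)) *\<^sub>v vec_block n x i = 0\<^sub>v (dim_row (C i))" if "l \<in> {1..n}" for l
  proof -
    have nN: "n \<le> N*n" using N by simp
    have "l - 1 < N*n" using that nN by (simp only: atLeastAtMost_iff) linarith
    then show ?thesis using undetectable_subspace_outputs(1)[OF A C H L x _ i] C i by auto
  qed
  moreover have "poly_mat ?q ?Ac *\<^sub>v map_vec complex_of_real (vec_block n x i) = 0\<^sub>v n"
  proof -
    have "poly_mat ?q (kron (1\<^sub>m N) ?Ac) *\<^sub>v map_vec complex_of_real x = 0\<^sub>v (N*n)"
      using x A min_poly_kron_one[OF A N] map_mat_kron_one[of complex_of_real N A]
      unfolding undetectable_subspace_def by simp
    then have "vec_block n (kron (1\<^sub>m N) (poly_mat ?q ?Ac) *\<^sub>v map_vec complex_of_real x) i = 0\<^sub>v n"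
      using poly_mat_kron_one[OF Ac] vec_block_zero[OF i] by metis
    then show ?thesis
      using vec_block_kron_one_mult_vec[OF Pc _ i] vec_block_map_vec[OF xc i, of complex_of_real] xc by simp
  qed
  ultimately show ?thesis using A C i unfolding undetectable_subspace_def by auto
qed

lemma undetectable_blocks_agree:
  fixes A H Adj :: "real mat" and C :: "nat \<Rightarrow> real mat"
  assumes A: "A \<in> carrier_mat n n" and C: "\<forall>i<N. C i \<in> carrier_mat (m i) n"
    and H: "H \<in> carrier_mat p n" and obs: "observable H A"
    and graph: "adjacency_matrix N Adj" and tree: "has_spanning_tree N Adj"
    and x: "x \<in> undetectable_subspace (stack (block_diag N m n C) (kron (laplacian N Adj) H))
                                       (kron (1\<^sub>m N) A)"
    and j: "j < N"
  shows "vec_block n x j = vec_block n x 0"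
proof -
  let ?L = "laplacian N Adj"
  have L: "?L \<in> carrier_mat N N" by (simp add: laplacian_def)
  have "n \<le> N*n" using j by simp
  have consensus: "block_lincomb ?L n x i = 0\<^sub>v n" if i: "i < N" for i
  proof (rule observable_imp_eq_zero[OF obs A block_lincomb_carrier])
    fix k assume "k < n"
    then have "k < N*n" using \<open>n \<le> N*n\<close> by linarith
    then show "(H * A ^\<^sub>m k) *\<^sub>v block_lincomb ?L n x i = 0\<^sub>v (dim_row H)"
      using undetectable_subspace_outputs(2)[OF A C H L x _ i] H by auto
  qed
  have "x $ (j*n+a) = x $ (0*n+a)" if a: "a < n" for a
  proof (rule laplacian_kernel_constant[OF graph tree, where u = "\<lambda>j. x $ (j*n+a)"])
    show "\<forall>i<N. (\<Sum>j<N. ?L $$ (i,j) * x $ (j*n+a)) = 0"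
      using consensus a L unfolding block_lincomb_def by (auto simp: vec_eq_iff)
  qed (use j in auto)
  then show ?thesis by (auto simp: vec_block_def)
qed

theorem corollary1:
  fixes n N p :: nat and m :: "nat \<Rightarrow> nat"
    and A H Adj :: "real mat" and C :: "nat \<Rightarrow> real mat"
  assumes A: "A \<in> carrier_mat n n"
    and C: "\<forall>i<N. C i \<in> carrier_mat (m i) n"
    and H: "H \<in> carrier_mat p n"
    and obs: "observable H A"
    and graph: "adjacency_matrix N Adj"
    and tree: "has_spanning_tree N Adj"
    and undet: "(\<Inter>i\<in>{..<N}. undetectable_subspace (C i) A) = {0\<^sub>v n}"
  shows "detectable (stack (block_diag N m n C) (kron (laplacian N Adj) H))
                    (kron (1\<^sub>m N) A)"
proof -
  let ?U = "undetectable_subspace (stack (block_diag N m n C) (kron (laplacian N Adj) H)) (kron (1\<^sub>m N) A)"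
  have L: "laplacian N Adj \<in> carrier_mat N N" by (simp add: laplacian_def)
  have "x = 0\<^sub>v (N*n)" if x: "x \<in> ?U" for x
  proof -
    have agree: "vec_block n x i = vec_block n x 0" if "i < N" for i
      using undetectable_blocks_agree[OF A C H obs graph tree x that] .
    have "vec_block n x 0 \<in> undetectable_subspace (C i) A" if "i < N" for i
      using vec_block_mem_undetectable_subspace[OF A C H L x that] unfolding agree[OF that] .
    then have "vec_block n x 0 \<in> (\<Inter>i\<in>{..<N}. undetectable_subspace (C i) A)" by blast
    then have blocks: "vec_block n x i = 0\<^sub>v n" if "i < N" for i
      unfolding agree[OF that] undet by blast
    have "x \<in> carrier_vec (N*n)" using x A unfolding undetectable_subspace_def by simp
    then show ?thesis using blocks by (rule vec_eq_zero_if_blocks_zero)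
  qed
  moreover have "0\<^sub>v (N*n) \<in> ?U"
    using zero_mem_undetectable_subspace[of "kron (1\<^sub>m N) A"] A by simp
  ultimately have "?U = {0\<^sub>v (N*n)}" by blast
  then show ?thesis unfolding detectable_def using A by simp
qed

end
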